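(* Let $k$ be a field, $\mathsf{E}$ a locally finite $k$-linear category, $P$ a locally finite left $\mathsf{E}$-module, and $(Q_\xi)_{\xi\in\Xi}$ an arbitrary family of big $\mathsf{E}$-submodules of $P$. Then $\bigcap_{\xi\in\Xi}Q_\xi$ is a big $\mathsf{E}$-submodule of $P$.
   Context: A small $k$-linear category $\mathsf{E}$ has $k$-vector spaces $\operatorname{Hom}_\mathsf{E}(x,y)$, $k$-bilinear associative composition and identities with $\mathrm{id}_x\ne0$. A left $\mathsf{E}$-module is a $k$-linear functor $P:\mathsf{E}\to k\text{-Vect}$; it is locally finite if every $P(x)$ is finite-dimensional. Write $x\preceq y$ if there are $n\ge1$ and objects $x=z_0,\dots,z_n=y$ with $\operatorname{Hom}_\mathsf{E}(z_{i-1},z_i)\neq0$ for all $i$. $\mathsf{E}$ is locally finite if all Hom spaces are finite-dimensional and every $\{z:x\preceq z\preceq y\}$ is finite. A left $\mathsf{E}$-module $T$ is contrafinite if for every object $y$ there is a finite set of objects $A$ such that the action map $\operatorname{Hom}_\mathsf{E}(x,y)\otimes_kT(x)\to T(y)$ vanishes for all $x\notin A$. A submodule $Q\subseteq P$ is big if $P/Q$ is contrafinite. *)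

theory Defs
  imports Complex_Main
begin

definition fin_dim_subspace :: "('k::field \<Rightarrow> 'b::ab_group_add \<Rightarrow> 'b) \<Rightarrow> 'b set \<Rightarrow> bool" where
  "fin_dim_subspace s S \<longleftrightarrow> module.subspace s S \<and>
     (\<exists>B. finite B \<and> B \<subseteq> S \<and> module.span s B = S)"

text \<open>Hom x y is a subspace of an
 ambient k-vector space 'm (with scalar multiplication sM); composition
 cmp x y z g f : Hom y z \<times> Hom x y \<rightarrow> Hom x z (g after f); identities ident x.\<close>
definition klinear_cat ::
  "('k::field \<Rightarrow> 'm::ab_group_add \<Rightarrow> 'm) \<Rightarrow> ('o \<Rightarrow> 'o \<Rightarrow> 'm set)
   \<Rightarrow> ('o \<Rightarrow> 'o \<Rightarrow> 'o \<Rightarrow> 'm \<Rightarrow> 'm \<Rightarrow> 'm) \<Rightarrow> ('o \<Rightarrow> 'm) \<Rightarrow> bool" where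
  "klinear_cat sM Hom cmp ident \<longleftrightarrow>
     vector_space sM \<and>
     (\<forall>x y. module.subspace sM (Hom x y)) \<and>
     (\<forall>x y z. \<forall>g\<in>Hom y z. \<forall>f\<in>Hom x y. cmp x y z g f \<in> Hom x z) \<and>
     (\<forall>x y z. \<forall>g\<in>Hom y z. \<forall>f1\<in>Hom x y. \<forall>f2\<in>Hom x y.
        cmp x y z g (f1 + f2) = cmp x y z g f1 + cmp x y z g f2) \<and>
     (\<forall>x y z. \<forall>g1\<in>Hom y z. \<forall>g2\<in>Hom y z. \<forall>f\<in>Hom x y.
        cmp x y z (g1 + g2) f = cmp x y z g1 f + cmp x y z g2 f) \<and>
     (\<forall>x y z c. \<forall>g\<in>Hom y z. \<forall>f\<in>Hom x y.
        cmp x y z (sM c g) f = sM c (cmp x y z g f) \<and>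
        cmp x y z g (sM c f) = sM c (cmp x y z g f)) \<and>
     (\<forall>w x y z. \<forall>h\<in>Hom y z. \<forall>g\<in>Hom x y. \<forall>f\<in>Hom w x.
        cmp w x z (cmp x y z h g) f = cmp w y z h (cmp w x y g f)) \<and>
     (\<forall>x. ident x \<in> Hom x x \<and> ident x \<noteq> 0) \<and>
     (\<forall>x y. \<forall>f\<in>Hom x y. cmp x y y (ident y) f = f \<and> cmp x x y f (ident x) = f)"

definition cat_prec :: "('o \<Rightarrow> 'o \<Rightarrow> 'm::zero set) \<Rightarrow> 'o \<Rightarrow> 'o \<Rightarrow> bool" where
  "cat_prec Hom x y \<longleftrightarrow> (\<lambda>a b. Hom a b \<noteq> {0})\<^sup>+\<^sup>+ x y"

definition locally_finite_cat ::
  "('k::field \<Rightarrow> 'm::ab_group_add \<Rightarrow> 'm) \<Rightarrow> ('o \<Rightarrow> 'o \<Rightarrow> 'm set) \<Rightarrow> bool" where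
  "locally_finite_cat sM Hom \<longleftrightarrow>
     (\<forall>x y. fin_dim_subspace sM (Hom x y)) \<and>
     (\<forall>x y. finite {z. cat_prec Hom x z \<and> cat_prec Hom z y})"

text \<open>A left E-module (k-linear functor E \<rightarrow> k-Vect): P x is a subspace of an ambient
 k-vector space 'v (scalar multiplication sV); act x y f v is the action of f \<in> Hom x y.\<close>
definition left_module ::
  "('k::field \<Rightarrow> 'm::ab_group_add \<Rightarrow> 'm) \<Rightarrow> ('o \<Rightarrow> 'o \<Rightarrow> 'm set)
   \<Rightarrow> ('o \<Rightarrow> 'o \<Rightarrow> 'o \<Rightarrow> 'm \<Rightarrow> 'm \<Rightarrow> 'm) \<Rightarrow> ('o \<Rightarrow> 'm)
   \<Rightarrow> ('k \<Rightarrow> 'v::ab_group_add \<Rightarrow> 'v) \<Rightarrow> ('o \<Rightarrow> 'v set) \<Rightarrow> ('o \<Rightarrow> 'o \<Rightarrow> 'm \<Rightarrow> 'v \<Rightarrow> 'v) \<Rightarrow> bool" where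
  "left_module sM Hom cmp ident sV P act \<longleftrightarrow>
     vector_space sV \<and>
     (\<forall>x. module.subspace sV (P x)) \<and>
     (\<forall>x y. \<forall>f\<in>Hom x y. \<forall>v\<in>P x. act x y f v \<in> P y) \<and>
     (\<forall>x y. \<forall>f\<in>Hom x y. \<forall>v1\<in>P x. \<forall>v2\<in>P x.
        act x y f (v1 + v2) = act x y f v1 + act x y f v2) \<and>
     (\<forall>x y. \<forall>f1\<in>Hom x y. \<forall>f2\<in>Hom x y. \<forall>v\<in>P x.
        act x y (f1 + f2) v = act x y f1 v + act x y f2 v) \<and>
     (\<forall>x y c. \<forall>f\<in>Hom x y. \<forall>v\<in>P x.
        act x y (sM c f) v = sV c (act x y f v) \<and> act x y f (sV c v) = sV c (act x y f v)) \<and>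
     (\<forall>x y z. \<forall>g\<in>Hom y z. \<forall>f\<in>Hom x y. \<forall>v\<in>P x.
        act x z (cmp x y z g f) v = act y z g (act x y f v)) \<and>
     (\<forall>x. \<forall>v\<in>P x. act x x (ident x) v = v)"

definition locally_finite_module :: "('k::field \<Rightarrow> 'v::ab_group_add \<Rightarrow> 'v) \<Rightarrow> ('o \<Rightarrow> 'v set) \<Rightarrow> bool" where
  "locally_finite_module sV P \<longleftrightarrow> (\<forall>x. fin_dim_subspace sV (P x))"

definition submodule ::
  "('k::field \<Rightarrow> 'v::ab_group_add \<Rightarrow> 'v) \<Rightarrow> ('o \<Rightarrow> 'o \<Rightarrow> 'm set)
   \<Rightarrow> ('o \<Rightarrow> 'o \<Rightarrow> 'm \<Rightarrow> 'v \<Rightarrow> 'v) \<Rightarrow> ('o \<Rightarrow> 'v set) \<Rightarrow> ('o \<Rightarrow> 'v set) \<Rightarrow> bool" where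
  "submodule sV Hom act P Q \<longleftrightarrow>
     (\<forall>x. Q x \<subseteq> P x \<and> module.subspace sV (Q x)) \<and>
     (\<forall>x y. \<forall>f\<in>Hom x y. \<forall>v\<in>Q x. act x y f v \<in> Q y)"

text \<open>Contrafinite, for a module T with action actT and zero vectors zT y of T y.
 The action map Hom(x,y) \<otimes> T(x) \<rightarrow> T(y) vanishes iff it vanishes on all pure tensors.\<close>
definition contrafinite ::
  "('o \<Rightarrow> 'o \<Rightarrow> 'm set) \<Rightarrow> ('o \<Rightarrow> 't set) \<Rightarrow> ('o \<Rightarrow> 'o \<Rightarrow> 'm \<Rightarrow> 't \<Rightarrow> 't) \<Rightarrow> ('o \<Rightarrow> 't) \<Rightarrow> bool" where
  "contrafinite Hom T actT zT \<longleftrightarrow>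
     (\<forall>y. \<exists>A. finite A \<and> (\<forall>x. x \<notin> A \<longrightarrow> (\<forall>f\<in>Hom x y. \<forall>t\<in>T x. actT x y f t = zT y)))"

text \<open>Quotient module P/Q: elements of (P/Q)(x) are the cosets v + Q x, v \<in> P x;
 zero of (P/Q)(y) is Q y; the action is induced from that of P on representatives.\<close>
definition coset :: "'v::ab_group_add set \<Rightarrow> 'v \<Rightarrow> 'v set" where
  "coset S v = (\<lambda>q. v + q) ` S"

definition quot_carrier :: "('o \<Rightarrow> 'v::ab_group_add set) \<Rightarrow> ('o \<Rightarrow> 'v set) \<Rightarrow> 'o \<Rightarrow> 'v set set" where
  "quot_carrier P Q x = coset (Q x) ` P x"

definition quot_act ::
  "('o \<Rightarrow> 'o \<Rightarrow> 'm \<Rightarrow> 'v::ab_group_add \<Rightarrow> 'v) \<Rightarrow> ('o \<Rightarrow> 'v set) \<Rightarrow> 'o \<Rightarrow> 'o \<Rightarrow> 'm \<Rightarrow> 'v set \<Rightarrow> 'v set" where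
  "quot_act act Q x y f C = coset (Q y) (act x y f (SOME v. v \<in> C))"

definition big_submodule ::
  "('k::field \<Rightarrow> 'v::ab_group_add \<Rightarrow> 'v) \<Rightarrow> ('o \<Rightarrow> 'o \<Rightarrow> 'm set)
   \<Rightarrow> ('o \<Rightarrow> 'o \<Rightarrow> 'm \<Rightarrow> 'v \<Rightarrow> 'v) \<Rightarrow> ('o \<Rightarrow> 'v set) \<Rightarrow> ('o \<Rightarrow> 'v set) \<Rightarrow> bool" where
  "big_submodule sV Hom act P Q \<longleftrightarrow>
     submodule sV Hom act P Q \<and>
     contrafinite Hom (quot_carrier P Q) (quot_act act Q) Q"

end

theory Submission
  imports Defs
begin

text \<open>
  The quotient \<open>P/Q\<close> is contrafinite iff for every \<open>y\<close> the action maps \<open>P x\<close> into \<open>Q y\<close>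
  for all but finitely many \<open>x\<close>. Fix \<open>y\<close>. Since \<open>P y\<close> is finite-dimensional, the
  intersection \<open>P y \<inter> \<Inter>\<^sub>\<xi> Q\<^sub>\<xi> y\<close> is already attained by a finite subfamily \<open>F\<close>: take one
  whose partial intersection has minimal dimension. For \<open>x\<close> outside the finite union of
  the exceptional sets of the \<open>Q\<^sub>\<xi>\<close>, \<open>\<xi> \<in> F\<close>, the action therefore lands in the whole
  intersection.
\<close>

lemma (in vector_space) subspace_dim_equal_finite_span:
  assumes "subspace S" "subspace T" "S \<subseteq> T" "T \<subseteq> span W" "finite W" "dim T \<le> dim S"
  shows "S = T"
proof (rule ccontr)
  assume "S \<noteq> T"
  then obtain t where t: "t \<in> T" "t \<notin> S" using assms(3) by blast
  obtain B where B: "B \<subseteq> S" "independent B" "S \<subseteq> span B" "card B = dim S"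
    using basis_exists by blast
  obtain C where C: "C \<subseteq> T" "independent C" "T \<subseteq> span C" "card C = dim T"
    using basis_exists by blast
  have "finite C"
    using independent_span_bound[OF assms(5) C(2)] C(1) assms(4) by blast
  have "t \<notin> span B"
    using span_minimal[OF B(1) assms(1)] t(2) by blast
  then have "independent (insert t B)"
    using B(2) by (rule independent_insertI)
  moreover have "insert t B \<subseteq> span C" using C(3) t(1) B(1) assms(3) by blast
  ultimately have "finite (insert t B) \<and> card (insert t B) \<le> card C"
    by (rule independent_span_bound[OF \<open>finite C\<close>])
  moreover have "t \<notin> B" using t(2) B(1) by blast
  ultimately show False using B(4) C(4) assms(6) by auto
qed

lemma (in vector_space) finite_subfamily_Inter_subspaces:
  assumes "finite W" "subspace S" "S \<subseteq> span W" "\<And>\<xi>. \<xi> \<in> Xi \<Longrightarrow> subspace (Q \<xi>)"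
  obtains F where "finite F" "F \<subseteq> Xi" "S \<inter> (\<Inter>\<xi>\<in>F. Q \<xi>) \<subseteq> (\<Inter>\<xi>\<in>Xi. Q \<xi>)"
proof -
  define S\<^sub>F where "S\<^sub>F F = S \<inter> (\<Inter>\<xi>\<in>F. Q \<xi>)" for F
  have subspace_S\<^sub>F: "subspace (S\<^sub>F F)" if "F \<subseteq> Xi" for F
    unfolding S\<^sub>F_def using assms(2,4) that by (intro subspace_inter subspace_Int) auto
  obtain F where F: "finite F" "F \<subseteq> Xi"
    and minimal: "\<And>G. finite G \<and> G \<subseteq> Xi \<Longrightarrow> dim (S\<^sub>F F) \<le> dim (S\<^sub>F G)"
    using ex_has_least_nat[of "\<lambda>F. finite F \<and> F \<subseteq> Xi" "{}" "\<lambda>F. dim (S\<^sub>F F)"] by auto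
  have "S\<^sub>F (insert \<xi> F) = S\<^sub>F F" if "\<xi> \<in> Xi" for \<xi>
  proof (rule subspace_dim_equal_finite_span[OF _ _ _ _ assms(1)])
    show "subspace (S\<^sub>F (insert \<xi> F))" "subspace (S\<^sub>F F)"
      using subspace_S\<^sub>F F that by auto
    show "S\<^sub>F (insert \<xi> F) \<subseteq> S\<^sub>F F" "S\<^sub>F F \<subseteq> span W"
      unfolding S\<^sub>F_def using assms(3) by auto
    show "dim (S\<^sub>F F) \<le> dim (S\<^sub>F (insert \<xi> F))"
      using minimal F that by simp
  qed
  then have "S\<^sub>F F \<subseteq> (\<Inter>\<xi>\<in>Xi. Q \<xi>)"
    unfolding S\<^sub>F_def by blast
  with F show thesis unfolding S\<^sub>F_def by (rule that)
qed

lemma (in module) coset_eq_iff: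
  assumes "subspace S"
  shows "coset S a = coset S b \<longleftrightarrow> a - b \<in> S"
proof
  assume "coset S a = coset S b"
  moreover have "a + 0 \<in> coset S a"
    unfolding coset_def using subspace_0[OF assms] by blast
  ultimately obtain q where "q \<in> S" "a = b + q"
    unfolding coset_def by auto
  then show "a - b \<in> S" by simp
next
  assume d: "a - b \<in> S"
  have "a + q \<in> coset S b" if "q \<in> S" for q
    using subspace_add[OF assms d that] unfolding coset_def
    by (auto intro!: image_eqI[where x = "a - b + q"])
  moreover have "b + q \<in> coset S a" if "q \<in> S" for q
    using subspace_diff[OF assms that d] unfolding coset_def
    by (auto intro!: image_eqI[where x = "q - (a - b)"])
  ultimately show "coset S a = coset S b"
    unfolding coset_def by blast
qed

lemma coset_0 [simp]: "coset S 0 = S"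
  by (simp add: coset_def)

lemma (in module) coset_eq_self_iff:
  assumes "subspace S"
  shows "coset S a = S \<longleftrightarrow> a \<in> S"
  using coset_eq_iff[OF assms, of a 0] by simp

lemma left_moduleD:
  assumes "left_module sM Hom cmp ident sV P act"
  shows "vector_space sV"
    and "module.subspace sV (P x)"
    and "f \<in> Hom x y \<Longrightarrow> v \<in> P x \<Longrightarrow> act x y f v \<in> P y"
    and "f \<in> Hom x y \<Longrightarrow> v \<in> P x \<Longrightarrow> w \<in> P x \<Longrightarrow> act x y f (v + w) = act x y f v + act x y f w"
  using assms unfolding left_module_def by simp_all

lemma submoduleD:
  assumes "submodule sV Hom act P Q"
  shows "Q x \<subseteq> P x"
    and "module.subspace sV (Q x)"
    and "f \<in> Hom x y \<Longrightarrow> v \<in> Q x \<Longrightarrow> act x y f v \<in> Q y"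
  using assms unfolding submodule_def by blast+

lemma submodule_INT:
  assumes "left_module sM Hom cmp ident sV P act"
    and "\<And>\<xi>. \<xi> \<in> Xi \<Longrightarrow> submodule sV Hom act P (Q \<xi>)"
  shows "submodule sV Hom act P (\<lambda>x. P x \<inter> (\<Inter>\<xi>\<in>Xi. Q \<xi> x))"
proof -
  interpret vector_space sV using left_moduleD(1)[OF assms(1)] .
  have "subspace (P x \<inter> (\<Inter>\<xi>\<in>Xi. Q \<xi> x))" for x
    using left_moduleD(2)[OF assms(1)] submoduleD(2)[OF assms(2)]
    by (intro subspace_inter subspace_Int) auto
  then show ?thesis
    unfolding submodule_def
    using left_moduleD(3)[OF assms(1)] submoduleD(3)[OF assms(2)] by auto
qed

lemma quot_act_coset:
  assumes "left_module sM Hom cmp ident sV P act" "submodule sV Hom act P Q"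
    and "f \<in> Hom x y" "v \<in> P x"
  shows "quot_act act Q x y f (coset (Q x) v) = coset (Q y) (act x y f v)"
proof -
  interpret vector_space sV using left_moduleD(1)[OF assms(1)] .
  note Q_subspace = submoduleD(2)[OF assms(2)]
  define u where "u = (SOME u. u \<in> coset (Q x) v)"
  have "v + 0 \<in> coset (Q x) v"
    unfolding coset_def using subspace_0[OF Q_subspace] by blast
  then have "u \<in> coset (Q x) v" unfolding u_def by (rule someI)
  then obtain q where q: "q \<in> Q x" "u = v + q" unfolding coset_def by blast
  have "q \<in> P x" using q(1) submoduleD(1)[OF assms(2)] by blast
  then have "act x y f u = act x y f v + act x y f q"
    by (simp add: q(2) left_moduleD(4)[OF assms(1,3,4)])
  then have "act x y f u - act x y f v \<in> Q y"
    using submoduleD(3)[OF assms(2,3) q(1)] by simp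
  then show ?thesis
    unfolding quot_act_def u_def[symmetric] by (simp add: coset_eq_iff[OF Q_subspace])
qed

definition acts_cofinitely_into ::
  "('o \<Rightarrow> 'o \<Rightarrow> 'm set) \<Rightarrow> ('o \<Rightarrow> 'o \<Rightarrow> 'm \<Rightarrow> 'v \<Rightarrow> 'v) \<Rightarrow> ('o \<Rightarrow> 'v set) \<Rightarrow> 'o \<Rightarrow> 'v set \<Rightarrow> bool"
  where "acts_cofinitely_into Hom act P y S \<longleftrightarrow>
    (\<exists>A. finite A \<and> (\<forall>x. x \<notin> A \<longrightarrow> (\<forall>f\<in>Hom x y. \<forall>v\<in>P x. act x y f v \<in> S)))"

lemma contrafinite_quotient_iff:
  assumes "left_module sM Hom cmp ident sV P act" "submodule sV Hom act P Q"
  shows "contrafinite Hom (quot_carrier P Q) (quot_act act Q) Q \<longleftrightarrow>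
    (\<forall>y. acts_cofinitely_into Hom act P y (Q y))"
proof -
  interpret vector_space sV using left_moduleD(1)[OF assms(1)] .
  have "quot_act act Q x y f (coset (Q x) v) = Q y \<longleftrightarrow> act x y f v \<in> Q y"
    if "f \<in> Hom x y" "v \<in> P x" for x y f v
    using quot_act_coset[OF assms that] coset_eq_self_iff[OF submoduleD(2)[OF assms(2)]]
    by simp
  then have "(\<forall>t\<in>quot_carrier P Q x. quot_act act Q x y f t = Q y) \<longleftrightarrow>
      (\<forall>v\<in>P x. act x y f v \<in> Q y)" if "f \<in> Hom x y" for x y f
    using that by (simp add: quot_carrier_def)
  then show ?thesis
    unfolding contrafinite_def acts_cofinitely_into_def by simp
qed

lemma big_submodule_iff:
  assumes "left_module sM Hom cmp ident sV P act"
  shows "big_submodule sV Hom act P Q \<longleftrightarrow>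
    submodule sV Hom act P Q \<and> (\<forall>y. acts_cofinitely_into Hom act P y (Q y))"
  using contrafinite_quotient_iff[OF assms] unfolding big_submodule_def by blast

lemma acts_cofinitely_into_INT:
  assumes "finite F" "\<And>\<xi>. \<xi> \<in> F \<Longrightarrow> acts_cofinitely_into Hom act P y (S \<xi>)"
  shows "acts_cofinitely_into Hom act P y (\<Inter>\<xi>\<in>F. S \<xi>)"
proof -
  have "\<forall>\<xi>\<in>F. \<exists>A. finite A \<and>
      (\<forall>x. x \<notin> A \<longrightarrow> (\<forall>f\<in>Hom x y. \<forall>v\<in>P x. act x y f v \<in> S \<xi>))"
    using assms(2) unfolding acts_cofinitely_into_def by blast
  from bchoice[OF this] obtain A where "\<forall>\<xi>\<in>F. finite (A \<xi>) \<and>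
      (\<forall>x. x \<notin> A \<xi> \<longrightarrow> (\<forall>f\<in>Hom x y. \<forall>v\<in>P x. act x y f v \<in> S \<xi>))"
    ..
  then show ?thesis
    unfolding acts_cofinitely_into_def using assms(1)
    by (intro exI[where x = "\<Union>\<xi>\<in>F. A \<xi>"]) auto
qed

lemma acts_cofinitely_into_mono:
  assumes "left_module sM Hom cmp ident sV P act"
    and "acts_cofinitely_into Hom act P y S" "P y \<inter> S \<subseteq> T"
  shows "acts_cofinitely_into Hom act P y T"
proof -
  obtain A where A: "finite A"
    "\<And>x f v. x \<notin> A \<Longrightarrow> f \<in> Hom x y \<Longrightarrow> v \<in> P x \<Longrightarrow> act x y f v \<in> S"
    using assms(2) unfolding acts_cofinitely_into_def by blast
  show ?thesis
    unfolding acts_cofinitely_into_def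
  proof (intro exI[of _ A] conjI allI impI ballI)
    fix x f v assume "x \<notin> A" "f \<in> Hom x y" "v \<in> P x"
    then have "act x y f v \<in> P y \<inter> S"
      using A(2) left_moduleD(3)[OF assms(1)] by simp
    then show "act x y f v \<in> T" using assms(3) by blast
  qed (fact A(1))
qed

theorem lemma4p10:
  fixes sM :: "'k::field \<Rightarrow> 'm::ab_group_add \<Rightarrow> 'm"
    and Hom :: "'o \<Rightarrow> 'o \<Rightarrow> 'm set"
    and cmp :: "'o \<Rightarrow> 'o \<Rightarrow> 'o \<Rightarrow> 'm \<Rightarrow> 'm \<Rightarrow> 'm"
    and ident :: "'o \<Rightarrow> 'm"
    and sV :: "'k \<Rightarrow> 'v::ab_group_add \<Rightarrow> 'v"
    and P :: "'o \<Rightarrow> 'v set"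
    and act :: "'o \<Rightarrow> 'o \<Rightarrow> 'm \<Rightarrow> 'v \<Rightarrow> 'v"
    and Xi :: "'i set"
    and Q :: "'i \<Rightarrow> 'o \<Rightarrow> 'v set"
  assumes "klinear_cat sM Hom cmp ident"
    and "locally_finite_cat sM Hom"
    and "left_module sM Hom cmp ident sV P act"
    and "locally_finite_module sV P"
    and "\<forall>\<xi>\<in>Xi. big_submodule sV Hom act P (Q \<xi>)"
  shows "big_submodule sV Hom act P (\<lambda>x. P x \<inter> (\<Inter>\<xi>\<in>Xi. Q \<xi> x))"
proof -
  interpret vector_space sV using left_moduleD(1)[OF assms(3)] .
  have Q_submodule: "\<And>\<xi>. \<xi> \<in> Xi \<Longrightarrow> submodule sV Hom act P (Q \<xi>)"
    and Q_cofinite: "\<And>\<xi> y. \<xi> \<in> Xi \<Longrightarrow> acts_cofinitely_into Hom act P y (Q \<xi> y)"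
    using assms(5) big_submodule_iff[OF assms(3)] by blast+
  have "acts_cofinitely_into Hom act P y (P y \<inter> (\<Inter>\<xi>\<in>Xi. Q \<xi> y))" for y
  proof -
    obtain W where W: "finite W" "span W = P y"
      using assms(4) unfolding locally_finite_module_def fin_dim_subspace_def by blast
    obtain F where F: "finite F" "F \<subseteq> Xi" "P y \<inter> (\<Inter>\<xi>\<in>F. Q \<xi> y) \<subseteq> (\<Inter>\<xi>\<in>Xi. Q \<xi> y)"
      by (rule finite_subfamily_Inter_subspaces[OF W(1) left_moduleD(2)[OF assms(3)]
            equalityD2[OF W(2)] submoduleD(2)[OF Q_submodule]])
    have "acts_cofinitely_into Hom act P y (\<Inter>\<xi>\<in>F. Q \<xi> y)"
      using F(1,2) Q_cofinite by (intro acts_cofinitely_into_INT) auto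
    then show ?thesis
      by (rule acts_cofinitely_into_mono[OF assms(3)]) (use F(3) in blast)
  qed
  moreover have "submodule sV Hom act P (\<lambda>x. P x \<inter> (\<Inter>\<xi>\<in>Xi. Q \<xi> x))"
    using assms(3) Q_submodule by (rule submodule_INT)
  ultimately show ?thesis
    using big_submodule_iff[OF assms(3)] by blast
qed

end
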